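(* Let $a$ be a strongly regular scale factor (extended evenly to negative arguments) such that there is a constant $C>0$ with \[ \left|\frac{\dddot a(t)\,a^2(t)}{\dot a^3(t)}\right|\le C\quad\text{for all } t>0. \] Then for every $\tau>0$ the function $f(\tau,t_0)$ is differentiable with respect to $\tau$, and \[ \frac{\partial f}{\partial\tau}(\tau,t_0)=\begin{cases}I_1(\tau,t_0)+I_2(\tau,t_0) & \text{if } t_0>0,\\ 2\frac{\partial f}{\partial\tau}(\tau,0)-I_1(\tau,-t_0)-I_2(\tau,-t_0) & \text{if } t_0<0,\end{cases} \] where \[ I_1(\tau,t_0)=-\frac{\dot a(\tau)}{a(\tau)}\int_{t_0}^{\tau}\left[3\frac{\ddot a^2(t)a(t)}{\dot a^4(t)}-\frac{\dddot a(t)a(t)}{\dot a^3(t)}\right]\left[\frac{\sqrt{a^2(\tau)-a^2(t_0)}}{\sqrt{a^2(\tau)-a^2(t)}}-1\right]dt, \] \[ I_2(\tau,t_0)=\frac{\dot a(\tau)}{a(\tau)}\int_{t_0}^{\tau}\frac{\ddot a(t)}{\dot a^2(t)}\left[\frac{a^2(\tau)}{\sqrt{a^2(\tau)-a^2(t)}\sqrt{a^2(\tau)-a^2(t_0)}}-1\right]dt, \] and \[ \frac{\partial f}{\partial\tau}(\tau,0)=\frac{\dot a(\tau)}{a(\tau)}\int_0^{\tau}\left[\frac{\ddot a(t)}{\dot a^2(t)}+\frac{\dddot a(t)a(t)}{\dot a^3(t)}-3\frac{\ddot a^2(t)a(t)}{\dot a^4(t)}\right]\left[\frac{a(\tau)}{\sqrt{a^2(\tau)-a^2(t)}}-1\right]dt.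 \]
   Context: A function $a:[0,\infty)\to[0,\infty)$ is a regular scale factor if: (a) $a(0)=0$; (b) $a$ is increasing and continuous on $[0,\infty)$, twice continuously differentiable on $(0,\infty)$, with an inverse function on $[0,\infty)$; (c) $\frac{a(t)\ddot a(t)}{\dot a(t)^2}\le1$ for all $t>0$ (presupposing $\dot a(t)\ne0$). It is strongly regular if also $\frac{a\ddot a}{\dot a^2}\ge-K$ on $(0,\infty)$ for a constant $K\ge1$. Extend $a$ by $a(-t)=a(t)$. For $0\le t_0<\tau$, $f(\tau,t_0)=\int_{t_0}^{\tau}\frac{\ddot a(t)}{\dot a(t)^2}\left(\frac{\sqrt{a^2(\tau)-a^2(t_0)}}{\sqrt{a^2(\tau)-a^2(t)}}-1\right)dt$, and for $-\tau<t_0<0$, $f(\tau,t_0)=2f(\tau,0)-f(\tau,-t_0)$. *)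

theory Defs
  imports "HOL-Analysis.Analysis"
begin

text \<open>Here a1, a2, a3 stand for the first, second and third derivative of the
scale factor a (required to be such on (0,\<infinity>) by the hypotheses of the theorem).\<close>

definition regular_scale_factor ::
  "(real \<Rightarrow> real) \<Rightarrow> (real \<Rightarrow> real) \<Rightarrow> (real \<Rightarrow> real) \<Rightarrow> bool" where
  "regular_scale_factor a a1 a2 \<longleftrightarrow>
     a 0 = 0 \<and>
     strict_mono_on {0..} a \<and> continuous_on {0..} a \<and>
     bij_betw a {0..} {0..} \<and>
     (\<forall>t>0. (a has_real_derivative a1 t) (at t)) \<and>
     (\<forall>t>0. (a1 has_real_derivative a2 t) (at t)) \<and>
     continuous_on {0<..} a2 \<and>
     (\<forall>t>0. a1 t \<noteq> 0) \<and>
     (\<forall>t>0. a t * a2 t / (a1 t)\<^sup>2 \<le> 1)"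

definition strongly_regular_scale_factor ::
  "(real \<Rightarrow> real) \<Rightarrow> (real \<Rightarrow> real) \<Rightarrow> (real \<Rightarrow> real) \<Rightarrow> bool" where
  "strongly_regular_scale_factor a a1 a2 \<longleftrightarrow>
     regular_scale_factor a a1 a2 \<and>
     (\<exists>K\<ge>1. \<forall>t>0. a t * a2 t / (a1 t)\<^sup>2 \<ge> - K)"

definition f_pos :: "(real \<Rightarrow> real) \<Rightarrow> (real \<Rightarrow> real) \<Rightarrow> (real \<Rightarrow> real) \<Rightarrow> real \<Rightarrow> real \<Rightarrow> real" where
  "f_pos a a1 a2 \<tau> t0 = integral {t0..\<tau>}
     (\<lambda>t. a2 t / (a1 t)\<^sup>2 *
        (sqrt ((a \<tau>)\<^sup>2 - (a t0)\<^sup>2) / sqrt ((a \<tau>)\<^sup>2 - (a t)\<^sup>2) - 1))"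

definition f_fun :: "(real \<Rightarrow> real) \<Rightarrow> (real \<Rightarrow> real) \<Rightarrow> (real \<Rightarrow> real) \<Rightarrow> real \<Rightarrow> real \<Rightarrow> real" where
  "f_fun a a1 a2 \<tau> t0 =
     (if 0 \<le> t0 then f_pos a a1 a2 \<tau> t0
      else 2 * f_pos a a1 a2 \<tau> 0 - f_pos a a1 a2 \<tau> (- t0))"

definition I1 :: "(real \<Rightarrow> real) \<Rightarrow> (real \<Rightarrow> real) \<Rightarrow> (real \<Rightarrow> real) \<Rightarrow> (real \<Rightarrow> real) \<Rightarrow> real \<Rightarrow> real \<Rightarrow> real" where
  "I1 a a1 a2 a3 \<tau> t0 = - (a1 \<tau> / a \<tau>) * integral {t0..\<tau>}
     (\<lambda>t. (3 * (a2 t)\<^sup>2 * a t / (a1 t)^4 - a3 t * a t / (a1 t)^3) *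
        (sqrt ((a \<tau>)\<^sup>2 - (a t0)\<^sup>2) / sqrt ((a \<tau>)\<^sup>2 - (a t)\<^sup>2) - 1))"

definition I2 :: "(real \<Rightarrow> real) \<Rightarrow> (real \<Rightarrow> real) \<Rightarrow> (real \<Rightarrow> real) \<Rightarrow> real \<Rightarrow> real \<Rightarrow> real" where
  "I2 a a1 a2 \<tau> t0 = (a1 \<tau> / a \<tau>) * integral {t0..\<tau>}
     (\<lambda>t. a2 t / (a1 t)\<^sup>2 *
        ((a \<tau>)\<^sup>2 / (sqrt ((a \<tau>)\<^sup>2 - (a t)\<^sup>2) * sqrt ((a \<tau>)\<^sup>2 - (a t0)\<^sup>2)) - 1))"

definition df0 :: "(real \<Rightarrow> real) \<Rightarrow> (real \<Rightarrow> real) \<Rightarrow> (real \<Rightarrow> real) \<Rightarrow> (real \<Rightarrow> real) \<Rightarrow> real \<Rightarrow> real" where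
  "df0 a a1 a2 a3 \<tau> = (a1 \<tau> / a \<tau>) * integral {0..\<tau>}
     (\<lambda>t. (a2 t / (a1 t)\<^sup>2 + a3 t * a t / (a1 t)^3 - 3 * (a2 t)\<^sup>2 * a t / (a1 t)^4) *
        (a \<tau> / sqrt ((a \<tau>)\<^sup>2 - (a t)\<^sup>2) - 1))"

end

theory Submission
  imports Defs
begin

text \<open>Substituting \<open>u = a t / a \<tau>\<close> and writing \<open>X = a \<tau>\<close>, \<open>x0 = a t0\<close> turns \<open>f(\<tau>, t0)\<close>
  into \<open>\<integral> X \<phi>(X u) (\<surd>(X\<^sup>2 - x0\<^sup>2) / (X \<surd>(1 - u\<^sup>2)) - 1) du\<close> over \<open>x0 / X < u < 1\<close>, where
  \<open>\<phi>\<close> is \<open>a2 / a1\<^sup>3\<close> expressed in the variable \<open>a t\<close>. Since \<open>a a2 / a1\<^sup>2 \<le> 1\<close> makes \<open>a / a1\<close>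
  nondecreasing, strong regularity and the bound on \<open>a3 a\<^sup>2 / a1\<^sup>3\<close> bound \<open>|\<phi>(x)| x\<^sup>2\<close> and
  \<open>|\<phi>'(x)| x\<^sup>3\<close> uniformly on bounded intervals. Hence the \<open>X\<close>-difference quotients of the
  integrand are dominated by an integrable function of \<open>u\<close>, and dominated convergence
  differentiates under the integral sign. The chain rule through \<open>X = a \<tau>\<close> contributes
  \<open>a1 \<tau>\<close>, and substituting back splits the derivative into \<open>I1 + I2\<close>, which at \<open>t0 = 0\<close>
  is the stated formula for \<open>\<partial>f/\<partial>\<tau>(\<tau>, 0)\<close>; the case \<open>t0 < 0\<close> follows by linearity.\<close>

section \<open>Differentiation under the integral sign\<close>

lemma integral_minus_point: "integral (A - {p}) f = integral A (f :: real \<Rightarrow> real)"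
  by (rule integral_spike_set) (auto intro: negligible_subset[OF negligible_sing[of p]])

lemma integrable_minus_point: "f integrable_on (A - {p}) \<longleftrightarrow> (f :: real \<Rightarrow> real) integrable_on A"
  by (rule integrable_spike_set_eq) (auto intro: negligible_subset[OF negligible_sing[of p]])

lemma abs_diff_le_by_deriv_bound:
  fixes f f' :: "real \<Rightarrow> real"
  assumes "\<And>\<xi>. \<xi> \<in> {min x y..max x y} \<Longrightarrow> (f has_real_derivative f' \<xi>) (at \<xi>)"
    and "\<And>\<xi>. \<xi> \<in> {min x y..max x y} \<Longrightarrow> \<bar>f' \<xi>\<bar> \<le> L"
  shows "\<bar>f y - f x\<bar> \<le> L * \<bar>y - x\<bar>"
  using field_differentiable_bound[of "{min x y..max x y}" f f' L y x] assms
  by (auto intro: has_field_derivative_at_within)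

lemma continuous_dominated_imp_absolutely_integrable:
  fixes f h :: "real \<Rightarrow> real"
  assumes "continuous_on {l<..<r} f" "h integrable_on {l<..<r}"
    and "\<And>u. u \<in> {l<..<r} \<Longrightarrow> \<bar>f u\<bar> \<le> h u"
  shows "f absolutely_integrable_on {l<..<r}"
  by (rule measurable_bounded_by_integrable_imp_absolutely_integrable[OF
        continuous_imp_measurable_on_sets_lebesgue[OF assms(1)]]) (use assms in auto)

lemma integral_difference_quotients_tendsto:
  fixes F :: "real \<Rightarrow> real \<Rightarrow> real"
  assumes int: "\<And>n. F (Z n) integrable_on S" "F X0 integrable_on S"
    and dom: "\<And>n u. u \<in> S \<Longrightarrow> \<bar>(F (Z n) u - F X0 u) / (Z n - X0)\<bar> \<le> h u"
    and h: "h integrable_on S"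
    and deriv: "\<And>u. u \<in> S \<Longrightarrow> ((\<lambda>X. F X u) has_real_derivative G u) (at X0)"
    and Z: "\<And>n. Z n \<noteq> X0" "Z \<longlonglongrightarrow> X0"
  shows "G integrable_on S"
    and "(\<lambda>n. (integral S (F (Z n)) - integral S (F X0)) / (Z n - X0)) \<longlonglongrightarrow> integral S G"
proof -
  define q where "q n u = (F (Z n) u - F X0 u) / (Z n - X0)" for n u
  have "q n integrable_on S" for n
    unfolding q_def divide_inverse by (intro integrable_on_mult_left integrable_diff int)
  moreover have "norm (q n u) \<le> h u" if "u \<in> S" for n u
    unfolding q_def real_norm_def using dom that by blast
  moreover have "(\<lambda>n. q n u) \<longlonglongrightarrow> G u" if "u \<in> S" for u
  proof -
    have "((\<lambda>X. (F X u - F X0 u) / (X - X0)) \<longlongrightarrow> G u) (at X0)"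
      using deriv[OF that] by (simp add: has_field_derivative_iff)
    then show ?thesis using Z unfolding tendsto_at_iff_sequentially q_def by (auto simp: o_def)
  qed
  ultimately have "G integrable_on S" "(\<lambda>n. integral S (q n)) \<longlonglongrightarrow> integral S G"
    using dominated_convergence[of q S h G] h by auto
  moreover have "integral S (q n) = (integral S (F (Z n)) - integral S (F X0)) / (Z n - X0)" for n
    unfolding q_def using int by (simp add: integral_diff)
  ultimately show "G integrable_on S"
    and "(\<lambda>n. (integral S (F (Z n)) - integral S (F X0)) / (Z n - X0)) \<longlonglongrightarrow> integral S G"
    by simp_all
qed

lemma has_real_derivative_integral_dominated:
  fixes F :: "real \<Rightarrow> real \<Rightarrow> real"
  assumes "\<delta> > 0"
    and int: "\<And>X. \<bar>X - X0\<bar> < \<delta> \<Longrightarrow> F X integrable_on S"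
    and dom: "\<And>X u. \<bar>X - X0\<bar> < \<delta> \<Longrightarrow> X \<noteq> X0 \<Longrightarrow> u \<in> S \<Longrightarrow>
                \<bar>(F X u - F X0 u) / (X - X0)\<bar> \<le> h u"
    and h: "h integrable_on S"
    and deriv: "\<And>u. u \<in> S \<Longrightarrow> ((\<lambda>X. F X u) has_real_derivative G u) (at X0)"
  shows "G integrable_on S"
    and "((\<lambda>X. integral S (F X)) has_real_derivative integral S G) (at X0)"
proof -
  have F0: "F X0 integrable_on S" using int assms(1) by simp
  have seq: "G integrable_on S"
    "(\<lambda>n. (integral S (F (Z n)) - integral S (F X0)) / (Z n - X0)) \<longlonglongrightarrow> integral S G"
    if Zd: "\<And>n. \<bar>Z n - X0\<bar> < \<delta>" and Zne: "\<And>n. Z n \<noteq> X0" and Z: "Z \<longlonglongrightarrow> X0" for Z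
    using integral_difference_quotients_tendsto[OF int[OF Zd] F0 dom[OF Zd Zne] h deriv Zne Z] by auto
  define Z0 where "Z0 n = X0 + \<delta> / 2 * inverse (real (Suc n))" for n
  have "Z0 \<longlonglongrightarrow> X0 + \<delta> / 2 * 0"
    unfolding Z0_def by (intro tendsto_intros LIMSEQ_inverse_real_of_nat)
  moreover have "\<bar>Z0 n - X0\<bar> < \<delta>" "Z0 n \<noteq> X0" for n
  proof -
    have "inverse (real (Suc n)) \<le> 1" by (simp add: inverse_le_1_iff)
    then show "\<bar>Z0 n - X0\<bar> < \<delta>" "Z0 n \<noteq> X0" using assms(1) by (auto simp: Z0_def)
  qed
  ultimately show "G integrable_on S" using seq(1)[of Z0] by simp
  have "((\<lambda>X. (integral S (F X) - integral S (F X0)) / (X - X0)) \<longlongrightarrow> integral S G)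
      (at X0 within ball X0 \<delta>)"
  proof (rule tendsto_at_iff_sequentially[THEN iffD2], intro allI impI)
    fix Z :: "nat \<Rightarrow> real" assume Z: "\<forall>i. Z i \<in> ball X0 \<delta> - {X0}" "Z \<longlonglongrightarrow> X0"
    have "dist (Z n) X0 < \<delta>" for n
      using Z(1) by (auto simp: dist_commute)
    then have Zd: "\<bar>Z n - X0\<bar> < \<delta>" for n
      by (simp only: dist_real_def)
    have Zne: "Z n \<noteq> X0" for n
      using Z(1) by auto
    from seq(2)[OF Zd Zne Z(2)]
    show "((\<lambda>X. (integral S (F X) - integral S (F X0)) / (X - X0)) \<circ> Z) \<longlonglongrightarrow> integral S G"
      unfolding comp_def .
  qed
  moreover have "at X0 within ball X0 \<delta> = at X0"
    using assms(1) by (intro at_within_open) auto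
  ultimately show "((\<lambda>X. integral S (F X)) has_real_derivative integral S G) (at X0)"
    unfolding has_field_derivative_iff by (simp only:)
qed

section \<open>The bracket of the integrand\<close>

lemma sqrt_one_minus_sq_pos: "0 \<le> u \<Longrightarrow> u < (1::real) \<Longrightarrow> sqrt (1 - u^2) > 0"
  using abs_square_less_1[of u] by simp

text \<open>Majorants for the difference quotients of the substituted integrand. \<open>kernel1\<close> is
  integrable on \<open>[0, 1]\<close> because the subtracted \<open>1\<close> cancels the factor \<open>1 / u\<^sup>2\<close> at \<open>0\<close>;
  \<open>kernel2\<close> is integrable only away from \<open>0\<close>, which suffices because it carries a factor
  \<open>x0\<^sup>2\<close> and for \<open>x0 > 0\<close> the integrand vanishes below \<open>u = x0 / X\<close>.\<close>

definition kernel1 :: "real \<Rightarrow> real" where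
  "kernel1 u = 1 / (sqrt (1 - u^2) * (1 + sqrt (1 - u^2)))"

definition kernel2 :: "real \<Rightarrow> real" where
  "kernel2 u = 1 / (u^2 * sqrt (1 - u^2))"

lemma kernel1_eq: assumes "0 < u" "u < 1" shows "(1 / sqrt (1 - u^2) - 1) / u^2 = kernel1 u"
proof -
  define s where "s = sqrt (1 - u^2)"
  have s: "s > 0" using sqrt_one_minus_sq_pos assms by (simp add: s_def)
  have "u^2 \<le> 1" using assms by (simp add: power_le_one)
  then have u2: "u^2 = (1 - s) * (1 + s)" by (simp add: s_def algebra_simps)
  have "1 - s \<noteq> 0" using u2 assms by auto
  have "(1 / s - 1) / ((1 - s) * (1 + s)) = (1 - s) / s / ((1 - s) * (1 + s))"
    using s by (simp add: field_simps)
  also have "\<dots> = 1 / (s * (1 + s))"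
    using s \<open>1 - s \<noteq> 0\<close> by (simp add: divide_divide_eq_left)
  finally have "(1 / s - 1) / u^2 = 1 / (s * (1 + s))" unfolding u2 .
  then show ?thesis by (simp only: kernel1_def s_def)
qed

lemma kernel1_integrable: assumes "0 \<le> l" shows "kernel1 integrable_on {l<..<1}"
proof -
  define G where "G u = u / (1 + sqrt (1 - u^2))" for u :: real
  have "(kernel1 has_integral G 1 - G 0) {0..1}"
  proof (rule fundamental_theorem_of_calculus_interior)
    show "continuous_on {0..1} G" unfolding G_def
    proof (intro continuous_intros ballI)
      show "1 + sqrt (1 - u^2) \<noteq> 0" if "u \<in> {0..1}" for u :: real
        using that power_le_one[of u 2] by (smt (verit) real_sqrt_ge_zero atLeastAtMost_iff)
    qed
    fix u :: real assume u: "u \<in> {0<..<1}"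
    define s where "s = sqrt (1 - u^2)"
    have s: "s > 0" using sqrt_one_minus_sq_pos u by (simp add: s_def)
    have "u^2 \<le> 1" using u by (simp add: power_le_one)
    then have ss: "s^2 = 1 - u^2" by (simp add: s_def)
    have s': "1 + sqrt (1 - u*u) \<noteq> 0" using s unfolding s_def power2_eq_square by linarith
    have D: "(G has_real_derivative ((1 + s) - u * (- (2 * u) / (2 * s))) / (1 + s)^2) (at u)"
      unfolding G_def s_def using s u s'
      by (auto intro!: derivative_eq_intros simp: s_def power2_eq_square field_simps)
    have "((1 + s) - u * (- (2 * u) / (2 * s))) / (1 + s)^2 = (s + s^2 + u^2) / (s * (1 + s)^2)"
      using s by (simp add: field_simps power2_eq_square)
    also have "\<dots> = (1 + s) / (s * (1 + s)^2)" using ss by simp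
    also have "\<dots> = 1 / (s * (1 + s))" using s by (simp add: power2_eq_square)
    also have "\<dots> = kernel1 u" unfolding kernel1_def s_def ..
    finally show "(G has_vector_derivative kernel1 u) (at u)"
      using D by (simp add: has_real_derivative_iff_has_vector_derivative)
  qed simp
  then have "kernel1 integrable_on {0..1}" by blast
  then have "kernel1 integrable_on {l..1}"
    by (rule integrable_on_subinterval) (use assms in auto)
  then show ?thesis by (simp add: integrable_on_Icc_iff_Ioo)
qed

lemma kernel2_integrable: assumes "0 < l" shows "kernel2 integrable_on {l<..<1}"
proof (cases "l \<le> 1")
  case True
  define G where "G u = - sqrt (1 - u^2) / u" for u :: real
  have "(kernel2 has_integral G 1 - G l) {l..1}"
  proof (rule fundamental_theorem_of_calculus_interior[OF True])
    show "continuous_on {l..1} G" unfolding G_def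
      using assms by (intro continuous_intros) auto
    fix u :: real assume u: "u \<in> {l<..<1}"
    then have u0: "u > 0" using assms by simp
    define s where "s = sqrt (1 - u^2)"
    have s: "s > 0" using sqrt_one_minus_sq_pos u u0 by (simp add: s_def)
    have "u^2 \<le> 1" using u u0 by (simp add: power_le_one)
    then have ss: "s^2 = 1 - u^2" by (simp add: s_def)
    have D: "(G has_real_derivative (u * u / s + s) / (u * u)) (at u)"
      unfolding G_def s_def using s u0 u sqrt_one_minus_sq_pos[of u]
      by (auto intro!: derivative_eq_intros simp: s_def power2_eq_square field_simps)
    have "(u * u / s + s) / (u * u) = (u^2 + s^2) / (u^2 * s)"
      using s u0 by (simp add: field_simps power2_eq_square)
    also have "\<dots> = kernel2 u" unfolding kernel2_def s_def[symmetric] using ss by simp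
    finally show "(G has_vector_derivative kernel2 u) (at u)"
      using D by (simp add: has_real_derivative_iff_has_vector_derivative)
  qed
  then show ?thesis using integrable_on_Icc_iff_Ioo by blast
qed (simp add: integrable_on_empty)

lemma mult_sqrt_one_minus_sq: assumes "X > 0" "0 \<le> y" "y \<le> X"
  shows "X * sqrt (1 - (y / X)^2) = sqrt (X^2 - y^2)"
proof -
  have "X * sqrt (1 - (y / X)^2) = sqrt (X^2 * (1 - (y / X)^2))"
    using assms by (simp add: real_sqrt_mult)
  also have "X^2 * (1 - (y / X)^2) = X^2 - y^2" using assms by (simp add: field_simps power2_eq_square)
  finally show ?thesis .
qed

text \<open>With \<open>X = a \<tau>\<close>, \<open>x0 = a t0\<close> and \<open>u = a t / a \<tau>\<close>, \<open>beta x0 X u\<close> is the bracket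
  \<open>\<surd>(a\<^sup>2 \<tau> - a\<^sup>2 t0) / \<surd>(a\<^sup>2 \<tau> - a\<^sup>2 t) - 1\<close> in the definition of \<open>f\<close>, and \<open>dbeta\<close> its \<open>X\<close>-derivative.\<close>

definition beta :: "real \<Rightarrow> real \<Rightarrow> real \<Rightarrow> real" where
  "beta x0 X u = sqrt (X^2 - x0^2) / (X * sqrt (1 - u^2)) - 1"

definition dbeta :: "real \<Rightarrow> real \<Rightarrow> real \<Rightarrow> real" where
  "dbeta x0 X u = x0^2 / (X^2 * sqrt (X^2 - x0^2) * sqrt (1 - u^2))"

lemma beta_has_real_derivative:
  assumes "0 \<le> x0" "x0 < X" "0 \<le> u" "u < 1"
  shows "((\<lambda>X. beta x0 X u) has_real_derivative dbeta x0 X u) (at X)"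
proof -
  define s where "s = sqrt (1 - u^2)"
  have s: "s > 0" using sqrt_one_minus_sq_pos assms by (simp add: s_def)
  have d: "X^2 - x0^2 > 0" using assms by (simp add: power_strict_mono)
  define r where "r = sqrt (X^2 - x0^2)"
  have r: "r > 0" "r^2 = X^2 - x0^2" using d by (auto simp: r_def)
  have i: "((\<lambda>X. X^2 - x0^2) has_real_derivative 2 * X) (at X)"
    by (auto intro!: derivative_eq_intros)
  have D1: "((\<lambda>X. sqrt (X^2 - x0^2)) has_real_derivative inverse r / 2 * (2 * X)) (at X)"
    unfolding r_def by (rule DERIV_chain2[OF DERIV_real_sqrt[OF d] i])
  have D2: "((\<lambda>X. X * s) has_real_derivative 1 * s) (at X)"
    by (rule DERIV_cmult_right[OF DERIV_ident])
  have "((\<lambda>X. sqrt (X^2 - x0^2) / (X * s) - 1) has_real_derivative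
      ((inverse r / 2 * (2 * X)) * (X * s) - r * (1 * s)) / ((X * s) * (X * s)) - 0) (at X)"
    unfolding r_def by (intro DERIV_diff DERIV_divide[OF D1[unfolded r_def] D2] DERIV_const) (use s assms in auto)
  moreover have "((inverse r / 2 * (2 * X)) * (X * s) - r * (1 * s)) / ((X * s) * (X * s)) - 0
      = (X^2 - r^2) / (X^2 * r * s)"
    using r s assms by (simp add: field_simps power2_eq_square)
  moreover have "\<dots> = dbeta x0 X u" unfolding dbeta_def r(2) s_def[symmetric] r_def[symmetric] by simp
  ultimately show ?thesis unfolding beta_def[abs_def] s_def by simp
qed

lemma beta_le:
  assumes "0 \<le> x0" "x0 \<le> X" "0 < X" "0 \<le> u" "u < 1"
  shows "beta x0 X u \<le> 1 / sqrt (1 - u^2) - 1"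
proof -
  have s: "sqrt (1 - u^2) > 0" using sqrt_one_minus_sq_pos assms by simp
  have "sqrt (X^2 - x0^2) \<le> sqrt (X^2)" by (rule real_sqrt_le_mono) simp
  then have "sqrt (X^2 - x0^2) \<le> X" using assms by simp
  then have "sqrt (X^2 - x0^2) / (X * sqrt (1 - u^2)) \<le> X / (X * sqrt (1 - u^2))"
    using s assms by (intro divide_right_mono) auto
  then show ?thesis using assms s unfolding beta_def by simp
qed

lemma beta_pos_iff:
  assumes "0 \<le> x0" "0 < X" "0 \<le> u" "u < 1"
  shows "beta x0 X u > 0 \<longleftrightarrow> x0 < X * u"
proof -
  have Xs: "X * sqrt (1 - u^2) > 0" using sqrt_one_minus_sq_pos assms by simp
  have "beta x0 X u > 0 \<longleftrightarrow> X * sqrt (1 - u^2) < sqrt (X^2 - x0^2)"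
    unfolding beta_def using Xs by (simp add: pos_less_divide_eq)
  also have "X * sqrt (1 - u^2) = sqrt (X^2 * (1 - u^2))" using assms by (simp add: real_sqrt_mult)
  also have "sqrt (X^2 * (1 - u^2)) < sqrt (X^2 - x0^2) \<longleftrightarrow> X^2 * (1 - u^2) < X^2 - x0^2"
    by (rule real_sqrt_less_iff)
  also have "\<dots> \<longleftrightarrow> x0^2 < (X * u)^2" by (simp add: algebra_simps power_mult_distrib)
  also have "\<dots> \<longleftrightarrow> x0 < X * u"
  proof -
    have "X * u \<ge> 0" using assms by simp
    then have "(X * u)^2 \<le> x0^2 \<longleftrightarrow> X * u \<le> x0" using assms(1) by (rule power_mono_iff) simp
    then show ?thesis by (simp add: not_le[symmetric])
  qed
  finally show ?thesis .
qed

lemma beta_at_ratio: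
  assumes "0 \<le> x0" "x0 \<le> y" "y < X"
  shows "beta x0 X (y / X) = sqrt (X^2 - x0^2) / sqrt (X^2 - y^2) - 1"
    and "beta x0 X (y / X) \<ge> 0"
proof -
  have X: "X > 0" using assms by linarith
  show b: "beta x0 X (y / X) = sqrt (X^2 - x0^2) / sqrt (X^2 - y^2) - 1"
    unfolding beta_def using mult_sqrt_one_minus_sq[OF X, of y] assms by simp
  have "sqrt (X^2 - y^2) \<le> sqrt (X^2 - x0^2)" using assms by (simp add: power_mono)
  moreover have "sqrt (X^2 - y^2) > 0" using assms by (simp add: power_strict_mono)
  ultimately show "beta x0 X (y / X) \<ge> 0" unfolding b by simp
qed

lemma continuous_on_beta:
  assumes "0 \<le> l" "0 < X" shows "continuous_on {l<..<1} (beta x0 X)"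
  unfolding beta_def[abs_def]
proof (intro continuous_intros ballI)
  show "X * sqrt (1 - u^2) \<noteq> 0" if "u \<in> {l<..<1}" for u
    using that sqrt_one_minus_sq_pos[of u] assms by simp
qed

lemma continuous_on_dbeta:
  assumes "0 \<le> l" "0 \<le> x0" "x0 < X" shows "continuous_on {l<..<1} (dbeta x0 X)"
  unfolding dbeta_def[abs_def]
proof (intro continuous_intros ballI)
  show "X^2 * sqrt (X^2 - x0^2) * sqrt (1 - u^2) \<noteq> 0" if "u \<in> {l<..<1}" for u
    using that sqrt_one_minus_sq_pos[of u] assms by (simp add: power_strict_mono)
qed

lemma abs_dbeta_le:
  assumes x0: "0 \<le> x0" "x0 < X0" and \<xi>: "X0 / 2 \<le> \<xi>" "X0 - x0 \<le> 2 * (\<xi> - x0)"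
    and u: "0 \<le> u" "u < 1"
  shows "\<bar>dbeta x0 \<xi> u\<bar> \<le> 8 * x0^2 / (X0^2 * (X0 - x0)) / sqrt (1 - u^2)"
proof -
  define s where "s = sqrt (1 - u^2)"
  have s: "s > 0" using sqrt_one_minus_sq_pos u by (simp add: s_def)
  have "((X0 - x0) / 2)^2 \<le> (\<xi> - x0)^2" using \<xi> x0 by (intro power_mono) auto
  also have "\<dots> \<le> \<xi>^2 - x0^2"
    using mult_right_mono[of x0 \<xi> x0] \<xi> x0 by (simp add: power2_eq_square algebra_simps)
  finally have "sqrt (((X0 - x0) / 2)^2) \<le> sqrt (\<xi>^2 - x0^2)" by (rule real_sqrt_le_mono)
  then have r: "(X0 - x0) / 2 \<le> sqrt (\<xi>^2 - x0^2)" using x0 by simp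
  have "X0^2 / 4 \<le> \<xi>^2" using \<xi> x0 power_mono[of "X0/2" \<xi> 2] by (simp add: power_divide)
  then have den: "X0^2 / 4 * ((X0 - x0) / 2) * s \<le> \<xi>^2 * sqrt (\<xi>^2 - x0^2) * s"
    using r s x0 by (intro mult_right_mono mult_mono) auto
  have dpos: "X0^2 / 4 * ((X0 - x0) / 2) * s > 0" using x0 s by simp
  have "\<bar>dbeta x0 \<xi> u\<bar> = x0^2 / (\<xi>^2 * sqrt (\<xi>^2 - x0^2) * s)"
    unfolding dbeta_def s_def[symmetric] using den dpos by simp
  also have "\<dots> \<le> x0^2 / (X0^2 / 4 * ((X0 - x0) / 2) * s)"
    by (rule divide_left_mono[OF den]) (use dpos den in auto)
  also have "\<dots> = 8 * x0^2 / (X0^2 * (X0 - x0)) / s" using x0 s by (simp add: field_simps)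
  finally show ?thesis unfolding s_def .
qed

lemma abs_beta_diff_le:
  assumes x0: "0 \<le> x0" "x0 < X0" and X': "\<bar>X' - X0\<bar> \<le> X0 / 2" "\<bar>X' - X0\<bar> \<le> (X0 - x0) / 2"
    and u: "0 \<le> u" "u < 1"
  shows "\<bar>beta x0 X' u - beta x0 X0 u\<bar> \<le> 8 * x0^2 / (X0^2 * (X0 - x0)) / sqrt (1 - u^2) * \<bar>X' - X0\<bar>"
proof -
  have "X0 / 2 \<le> \<xi> \<and> X0 - x0 \<le> 2 * (\<xi> - x0)" if "\<xi> \<in> {min X0 X'..max X0 X'}" for \<xi>
    using that X' by (auto simp: min_def max_def abs_le_iff split: if_splits)
  then show ?thesis using x0 u
    by (intro abs_diff_le_by_deriv_bound[where f = "\<lambda>X. beta x0 X u" and f' = "\<lambda>\<xi>. dbeta x0 \<xi> u"]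
        beta_has_real_derivative abs_dbeta_le) force+
qed

section \<open>Scale factors with bounded acceleration and jerk\<close>

locale scale_factor_bounds =
  fixes a a1 a2 a3 :: "real \<Rightarrow> real" and K C :: real
  assumes a_0: "a 0 = 0"
    and a_strict_mono: "strict_mono_on {0..} a"
    and a_bij: "bij_betw a {0..} {0..}"
    and a_deriv: "\<And>t. t > 0 \<Longrightarrow> (a has_real_derivative a1 t) (at t)"
    and a1_deriv: "\<And>t. t > 0 \<Longrightarrow> (a1 has_real_derivative a2 t) (at t)"
    and a2_deriv: "\<And>t. t > 0 \<Longrightarrow> (a2 has_real_derivative a3 t) (at t)"
    and a1_nonzero: "\<And>t. t > 0 \<Longrightarrow> a1 t \<noteq> 0"
    and acceleration_upper: "\<And>t. t > 0 \<Longrightarrow> a t * a2 t / (a1 t)^2 \<le> 1"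
    and K_ge_1: "K \<ge> 1"
    and acceleration_lower: "\<And>t. t > 0 \<Longrightarrow> a t * a2 t / (a1 t)^2 \<ge> - K"
    and jerk_bound: "\<And>t. t > 0 \<Longrightarrow> \<bar>a3 t * (a t)^2 / (a1 t)^3\<bar> \<le> C"
begin

lemma a_less: "0 \<le> s \<Longrightarrow> s < t \<Longrightarrow> a s < a t"
  using a_strict_mono by (auto simp: strict_mono_on_def)

lemma a_le: "0 \<le> s \<Longrightarrow> s \<le> t \<Longrightarrow> a s \<le> a t"
  using a_less by (cases "s = t") (auto simp: less_le)

lemma a_pos: "t > 0 \<Longrightarrow> a t > 0"
  using a_less[of 0 t] a_0 by simp

lemma a_nonneg: "t \<ge> 0 \<Longrightarrow> a t \<ge> 0"
  using a_le[of 0 t] a_0 by simp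

lemma a1_pos: "t > 0 \<Longrightarrow> a1 t > 0"
proof (rule ccontr)
  assume t: "t > 0" and "\<not> a1 t > 0"
  then have "a1 t < 0" using a1_nonzero[OF t] by linarith
  from DERIV_neg_dec_right[OF a_deriv[OF t] this] obtain d where d: "d > 0"
    "\<And>h. h > 0 \<Longrightarrow> h < d \<Longrightarrow> a (t + h) < a t" by blast
  have "a t < a (t + d/2)" using a_less[of t "t + d/2"] t d by simp
  with d(2)[of "d/2"] d(1) show False by simp
qed

definition ainv :: "real \<Rightarrow> real" where "ainv = the_inv_into {0..} a"

lemma ainv_a: "t \<ge> 0 \<Longrightarrow> ainv (a t) = t"
  unfolding ainv_def
  by (rule the_inv_into_f_f[OF strict_mono_on_imp_inj_on[OF a_strict_mono]]) simp

lemma a_ainv: "y \<ge> 0 \<Longrightarrow> a (ainv y) = y"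
  unfolding ainv_def using a_bij by (simp add: bij_betw_def f_the_inv_into_f)

lemma ainv_nonneg: "y \<ge> 0 \<Longrightarrow> ainv y \<ge> 0"
  unfolding ainv_def using a_bij the_inv_into_into[of a "{0..}" y "{0..}"] by (auto simp: bij_betw_def)

lemma ainv_less: assumes "0 \<le> y1" "y1 < y2" shows "ainv y1 < ainv y2"
proof (rule ccontr)
  assume "\<not> ainv y1 < ainv y2"
  then have "a (ainv y2) \<le> a (ainv y1)" using a_le ainv_nonneg assms by simp
  then show False using assms a_ainv[of y1] a_ainv[of y2] by simp
qed

lemma ainv_pos: "y > 0 \<Longrightarrow> ainv y > 0"
  using ainv_less[of 0 y] ainv_a[of 0] a_0 by simp

lemma ainv_has_real_derivative:
  assumes y: "y > 0"
  shows "(ainv has_real_derivative inverse (a1 (ainv y))) (at y)"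
proof -
  have "isCont ainv (a (ainv y))"
  proof (rule isCont_inverse_function[where d = "ainv y / 2" and f = a and x = "ainv y"])
    show "0 < ainv y / 2" using ainv_pos[OF y] by simp
  next
    fix z assume "\<bar>z - ainv y\<bar> \<le> ainv y / 2"
    then have "z > 0" using ainv_pos[OF y] by linarith
    then show "ainv (a z) = z" using ainv_a by simp
  next
    fix z assume "\<bar>z - ainv y\<bar> \<le> ainv y / 2"
    then have "z > 0" using ainv_pos[OF y] by linarith
    then show "isCont a z" by (rule DERIV_isCont[OF a_deriv])
  qed
  then have "isCont ainv y" using a_ainv y by simp
  with y show ?thesis
    using a_deriv[OF ainv_pos[OF y]] a1_nonzero[OF ainv_pos[OF y]] a_ainv
    by (intro DERIV_inverse_function[where f = a and a = 0 and b = "y + 1"]) auto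
qed

text \<open>The hypothesis \<open>a a2 / a1\<^sup>2 \<le> 1\<close> says exactly that \<open>a / a1\<close> is nondecreasing;
  this monotonicity is what turns the pointwise hypotheses into bounds uniform on \<open>(0, T]\<close>.\<close>

lemma a_div_a1_mono: assumes "0 < s" "s \<le> t" shows "a s / a1 s \<le> a t / a1 t"
proof (rule DERIV_nonneg_imp_nondecreasing[OF assms(2)])
  fix x assume x: "s \<le> x" "x \<le> t"
  then have x0: "x > 0" using assms by linarith
  have a1x: "a1 x > 0" using a1_pos x0 .
  have "((\<lambda>x. a x / a1 x) has_real_derivative (a1 x * a1 x - a x * a2 x) / (a1 x)^2) (at x)"
    using DERIV_divide[OF a_deriv[OF x0] a1_deriv[OF x0]] a1x by (simp add: power2_eq_square)
  moreover have "a x * a2 x \<le> (a1 x)^2" using acceleration_upper[OF x0] a1x by (simp add: divide_le_eq)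
  then have "0 \<le> (a1 x * a1 x - a x * a2 x) / (a1 x)^2" by (simp add: power2_eq_square)
  ultimately show "\<exists>y. ((\<lambda>x. a x / a1 x) has_real_derivative y) (at x) \<and> 0 \<le> y" by blast
qed

lemma abs_acceleration_le: "t > 0 \<Longrightarrow> \<bar>a t * a2 t / (a1 t)^2\<bar> \<le> K"
  using acceleration_upper[of t] acceleration_lower[of t] K_ge_1 by (simp add: abs_le_iff)

lemma C_nonneg: "C \<ge> 0"
  by (rule order_trans[OF abs_ge_zero jerk_bound[of 1]]) simp

definition q :: "real \<Rightarrow> real" where "q t = a2 t / (a1 t)^3"
definition dq :: "real \<Rightarrow> real" where "dq t = a3 t / (a1 t)^3 - 3 * (a2 t)^2 / (a1 t)^4"

lemma q_has_real_derivative: assumes t: "t > 0" shows "(q has_real_derivative dq t) (at t)"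
proof -
  have a1t: "a1 t > 0" using a1_pos t .
  have "((\<lambda>t. a2 t / (a1 t)^3) has_real_derivative
      (a3 t * (a1 t)^3 - a2 t * (3 * (a1 t)^2 * a2 t)) / ((a1 t)^3 * (a1 t)^3)) (at t)"
    using a1t by (intro DERIV_divide a2_deriv[OF t]) (auto intro!: derivative_eq_intros a1_deriv[OF t])
  moreover have "(a3 t * (a1 t)^3 - a2 t * (3 * (a1 t)^2 * a2 t)) / ((a1 t)^3 * (a1 t)^3) = dq t"
    using a1t by (simp add: dq_def field_simps power2_eq_square power3_eq_cube power4_eq_xxxx)
  ultimately show ?thesis unfolding q_def[abs_def] by simp
qed

lemma q_bound: assumes "0 < t" "t \<le> T" shows "\<bar>q t\<bar> * (a t)^2 \<le> K * (a T / a1 T)"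
proof -
  have a1t: "a1 t > 0" and at: "a t > 0" using a1_pos a_pos assms by auto
  have "\<bar>q t\<bar> * (a t)^2 = \<bar>a t * a2 t / (a1 t)^2\<bar> * (a t / a1 t)"
    using a1t at by (simp add: q_def abs_mult field_simps power2_eq_square power3_eq_cube)
  also have "\<dots> \<le> K * (a T / a1 T)"
    by (rule mult_mono) (use abs_acceleration_le[OF assms(1)] a_div_a1_mono[OF assms] K_ge_1 at a1t in auto)
  finally show ?thesis .
qed

lemma dq_bound:
  assumes "0 < t" "t \<le> T"
  shows "\<bar>dq t\<bar> * (a t)^3 / a1 t \<le> (C + 3 * K^2) * (a T / a1 T)"
proof -
  have a1t: "a1 t > 0" and at: "a t > 0" using a1_pos a_pos assms by auto
  define r where "r = a t * a2 t / (a1 t)^2"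
  define j where "j = a3 t * (a t)^2 / (a1 t)^3"
  have "\<bar>dq t\<bar> * (a t)^3 / a1 t = \<bar>dq t * (a t)^3 / a1 t\<bar>"
    using a1t at by (simp add: abs_mult abs_divide)
  also have "dq t * (a t)^3 / a1 t = (j - 3 * r^2) * (a t / a1 t)"
    using a1t at by (simp add: dq_def r_def j_def field_simps power2_eq_square power3_eq_cube power4_eq_xxxx)
  also have "\<bar>(j - 3 * r^2) * (a t / a1 t)\<bar> = \<bar>j - 3 * r^2\<bar> * (a t / a1 t)"
    using a1t at by (simp add: abs_mult)
  also have "\<dots> \<le> (C + 3 * K^2) * (a T / a1 T)"
  proof (rule mult_mono)
    have "r^2 \<le> K^2" using abs_acceleration_le[OF assms(1)] K_ge_1 unfolding r_def
      by (metis abs_le_square_iff abs_of_nonneg dual_order.trans zero_le_one)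
    moreover have "\<bar>j\<bar> \<le> C" using jerk_bound[OF assms(1)] by (simp add: j_def)
    ultimately show "\<bar>j - 3 * r^2\<bar> \<le> C + 3 * K^2" by (simp add: abs_le_iff) (smt (verit) zero_le_power2)
  qed (use a_div_a1_mono[OF assms] at a1t C_nonneg in auto)
  finally show ?thesis .
qed

text \<open>\<open>phi\<close> is \<open>a2 / a1\<^sup>3\<close> in the variable \<open>x = a t\<close>: with it, \<open>a2 / a1\<^sup>2 dt = phi x dx\<close>.\<close>

definition phi :: "real \<Rightarrow> real" where "phi x = q (ainv x)"
definition dphi :: "real \<Rightarrow> real" where "dphi x = dq (ainv x) / a1 (ainv x)"

lemma phi_has_real_derivative: "x > 0 \<Longrightarrow> (phi has_real_derivative dphi x) (at x)"
  unfolding phi_def[abs_def] dphi_def divide_inverse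
  by (rule DERIV_chain2[OF q_has_real_derivative ainv_has_real_derivative]) (use ainv_pos in auto)

definition Mphi :: "real \<Rightarrow> real" where
  "Mphi Y = (K + C + 3 * K^2) * (a (ainv Y) / a1 (ainv Y))"

lemma Mphi_nonneg: "Y > 0 \<Longrightarrow> Mphi Y \<ge> 0"
  unfolding Mphi_def using K_ge_1 C_nonneg a_pos a1_pos ainv_pos
  by (intro mult_nonneg_nonneg divide_nonneg_pos) (auto intro: less_imp_le)

lemma abs_phi_le: assumes "0 < x" "x \<le> Y" shows "\<bar>phi x\<bar> \<le> Mphi Y / x^2"
proof -
  have t: "0 < ainv x" "ainv x \<le> ainv Y" using ainv_pos ainv_less[of x Y] assms by (auto simp: le_less)
  have "\<bar>phi x\<bar> * x^2 = \<bar>q (ainv x)\<bar> * (a (ainv x))^2" using a_ainv assms by (simp add: phi_def)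
  also have "\<dots> \<le> K * (a (ainv Y) / a1 (ainv Y))" by (rule q_bound[OF t])
  also have "\<dots> \<le> Mphi Y" unfolding Mphi_def
    using C_nonneg K_ge_1 a_pos a1_pos t by (intro mult_right_mono) (auto intro: less_imp_le)
  finally show ?thesis using assms by (simp add: pos_le_divide_eq)
qed

lemma abs_x_dphi_le: assumes "0 < x" "x \<le> Y" shows "\<bar>x * dphi x\<bar> \<le> Mphi Y / x^2"
proof -
  have t: "0 < ainv x" "ainv x \<le> ainv Y" using ainv_pos ainv_less[of x Y] assms by (auto simp: le_less)
  have a1x: "a1 (ainv x) > 0" using a1_pos t by simp
  have "\<bar>x * dphi x\<bar> * x^2 = \<bar>dq (ainv x)\<bar> * (a (ainv x))^3 / a1 (ainv x)"
    using a_ainv assms a1x by (simp add: dphi_def abs_mult abs_divide power2_eq_square power3_eq_cube)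
  also have "\<dots> \<le> (C + 3 * K^2) * (a (ainv Y) / a1 (ainv Y))" by (rule dq_bound[OF t])
  also have "\<dots> \<le> Mphi Y" unfolding Mphi_def
    using K_ge_1 a_pos a1_pos t by (intro mult_right_mono) (auto intro: less_imp_le)
  finally show ?thesis using assms by (simp add: pos_le_divide_eq)
qed

section \<open>Differentiating the substituted integral\<close>

definition F :: "real \<Rightarrow> real \<Rightarrow> real \<Rightarrow> real" where
  "F x0 X u = X * phi (X * u) * max (beta x0 X u) 0"

text \<open>The three terms of the product rule for \<open>X * phi (X * u) * beta x0 X u\<close>; for
  \<open>u < x0 / X\<close> the integrand \<open>F\<close> vanishes near \<open>X\<close>, whence the cut-off in \<open>dF\<close>.\<close>

definition dF1 :: "real \<Rightarrow> real \<Rightarrow> real \<Rightarrow> real" where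
  "dF1 x0 X u = phi (X * u) * beta x0 X u"

definition dF2 :: "real \<Rightarrow> real \<Rightarrow> real \<Rightarrow> real" where
  "dF2 x0 X u = X * u * dphi (X * u) * beta x0 X u"

definition dF3 :: "real \<Rightarrow> real \<Rightarrow> real \<Rightarrow> real" where
  "dF3 x0 X u = X * phi (X * u) * dbeta x0 X u"

definition dF :: "real \<Rightarrow> real \<Rightarrow> real \<Rightarrow> real" where
  "dF x0 X u = (if x0 / X < u then dF1 x0 X u + dF2 x0 X u + dF3 x0 X u else 0)"

lemma X_phi_has_real_derivative:
  assumes "X > 0" "u > 0"
  shows "((\<lambda>X. X * phi (X * u)) has_real_derivative phi (X * u) + X * u * dphi (X * u)) (at X)"
proof -
  have "((\<lambda>X. phi (X * u)) has_real_derivative dphi (X * u) * (1 * u)) (at X)"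
    by (rule DERIV_chain2[OF phi_has_real_derivative DERIV_cmult_right[OF DERIV_ident]])
      (use assms in simp)
  from DERIV_mult[OF DERIV_ident this] show ?thesis by (simp add: algebra_simps)
qed

lemma abs_X_phi_derivative_le:
  assumes "0 < X0" "X0 / 2 \<le> \<xi>" "\<xi> \<le> 3 * X0 / 2" "0 < u" "u < 1"
  shows "\<bar>phi (\<xi> * u) + \<xi> * u * dphi (\<xi> * u)\<bar> \<le> 8 * Mphi (2 * X0) / (X0^2 * u^2)"
proof -
  define M where "M = Mphi (2 * X0)"
  have "\<xi> * u \<le> \<xi>" using assms by (simp add: mult_left_le)
  then have xu: "0 < \<xi> * u" "\<xi> * u \<le> 2 * X0" using assms by (simp, linarith)
  have "M / (\<xi> * u)^2 \<le> M / (X0 / 2 * u)^2"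
    using Mphi_nonneg[of "2 * X0"] assms
    by (intro divide_left_mono) (auto simp: M_def intro!: power_mono mult_right_mono)
  then have "\<bar>phi (\<xi> * u) + \<xi> * u * dphi (\<xi> * u)\<bar> \<le> 2 * (M / (X0 / 2 * u)^2)"
    using abs_triangle_ineq[of "phi (\<xi> * u)" "\<xi> * u * dphi (\<xi> * u)"]
      abs_phi_le[OF xu] abs_x_dphi_le[OF xu] unfolding M_def[symmetric] by linarith
  also have "\<dots> = 8 * M / (X0^2 * u^2)" by (simp add: power2_eq_square field_simps)
  finally show ?thesis unfolding M_def .
qed

lemma abs_X_phi_diff_le:
  assumes "0 < X0" "\<bar>X' - X0\<bar> \<le> X0 / 2" "0 < u" "u < 1"
  shows "\<bar>X' * phi (X' * u) - X0 * phi (X0 * u)\<bar> \<le> 8 * Mphi (2 * X0) / (X0^2 * u^2) * \<bar>X' - X0\<bar>"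
proof -
  have "X0 / 2 \<le> \<xi> \<and> \<xi> \<le> 3 * X0 / 2" if "\<xi> \<in> {min X0 X'..max X0 X'}" for \<xi>
    using that assms by (auto simp: min_def max_def abs_le_iff split: if_splits)
  then show ?thesis using assms
    by (intro abs_diff_le_by_deriv_bound[where f' = "\<lambda>\<xi>. phi (\<xi> * u) + \<xi> * u * dphi (\<xi> * u)"]
        X_phi_has_real_derivative abs_X_phi_derivative_le) force+
qed

lemma F_eq_0:
  assumes "0 \<le> x0" "0 < X" "0 \<le> u" "u < 1" "X * u \<le> x0"
  shows "F x0 X u = 0"
  using beta_pos_iff[OF assms(1-4)] assms(5) by (simp add: F_def)

lemma F_has_real_derivative:
  assumes "0 \<le> x0" "x0 < X0" "0 < u" "u < 1" "u \<noteq> x0 / X0"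
  shows "((\<lambda>X. F x0 X u) has_real_derivative dF x0 X0 u) (at X0)"
proof -
  have X0: "X0 > 0" using assms by linarith
  show ?thesis
  proof (cases "x0 / X0 < u")
    case True
    have D: "((\<lambda>X. X * phi (X * u) * beta x0 X u) has_real_derivative
        (phi (X0 * u) + X0 * u * dphi (X0 * u)) * beta x0 X0 u + dbeta x0 X0 u * (X0 * phi (X0 * u))) (at X0)"
      by (rule DERIV_mult[OF X_phi_has_real_derivative beta_has_real_derivative]) (use assms X0 in auto)
    have eq: "(phi (X0 * u) + X0 * u * dphi (X0 * u)) * beta x0 X0 u + dbeta x0 X0 u * (X0 * phi (X0 * u))
        = dF x0 X0 u" using True by (simp add: dF_def dF1_def dF2_def dF3_def algebra_simps)
    have F_eq: "X * phi (X * u) * beta x0 X u = F x0 X u" if "X \<in> {x0 / u<..}" for X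
    proof -
      have "x0 < X * u" using that assms by (simp add: divide_less_eq)
      moreover have "0 < X * u" using calculation assms by linarith
      then have "0 < X" using assms by (simp add: zero_less_mult_iff)
      ultimately show ?thesis using beta_pos_iff[of x0 X u] assms by (simp add: F_def)
    qed
    have "X0 \<in> {x0 / u<..}" using True X0 assms by (simp add: divide_less_eq mult.commute)
    from has_field_derivative_transform_within_open[OF D[unfolded eq] open_greaterThan this F_eq]
    show ?thesis .
  next
    case False
    then have "u < x0 / X0" using assms by simp
    then have "X0 * u < x0" using X0 by (simp add: less_divide_eq mult.commute)
    then have X0_in: "X0 \<in> {x0<..<x0 / u}" using assms by (simp add: less_divide_eq)
    have F_eq: "0 = F x0 X u" if "X \<in> {x0<..<x0 / u}" for X
      using that assms by (intro F_eq_0[symmetric]) (auto simp: less_divide_eq)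
    from has_field_derivative_transform_within_open[OF DERIV_const open_greaterThanLessThan X0_in F_eq]
    show ?thesis using False by (simp add: dF_def)
  qed
qed

lemma continuous_on_phi_scaled:
  assumes "0 \<le> l" "0 < X" shows "continuous_on {l<..<1} (\<lambda>u. phi (X * u))"
proof (rule continuous_at_imp_continuous_on, rule ballI)
  fix u assume "u \<in> {l<..<1}"
  then have "X * u > 0" using assms by simp
  then show "isCont (\<lambda>u. phi (X * u)) u"
    by (intro isCont_o2[OF _ DERIV_isCont[OF phi_has_real_derivative]]) (auto intro!: continuous_intros)
qed

lemma abs_F_le:
  assumes "0 \<le> x0" "x0 \<le> X" "0 < X" "0 < u" "u < 1" "X * u \<le> Y"
  shows "\<bar>F x0 X u\<bar> \<le> Mphi Y / X * kernel1 u"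
proof -
  define \<rho> where "\<rho> = 1 / sqrt (1 - u^2) - 1"
  have "0 < sqrt (1 - u^2)" "sqrt (1 - u^2) \<le> 1" using sqrt_one_minus_sq_pos[of u] assms by auto
  then have m: "0 \<le> max (beta x0 X u) 0" "max (beta x0 X u) 0 \<le> \<rho>"
    using beta_le[of x0 X u] assms by (auto simp: \<rho>_def)
  have "Y > 0" using assms mult_pos_pos[of X u] by linarith
  have "\<bar>F x0 X u\<bar> = X * \<bar>phi (X * u)\<bar> * max (beta x0 X u) 0"
    unfolding F_def using assms m by (simp add: abs_mult)
  also have "\<dots> \<le> X * (Mphi Y / (X * u)^2) * \<rho>"
    using abs_phi_le[of "X * u" Y] Mphi_nonneg[of Y] assms m \<open>Y > 0\<close>
    by (intro mult_mono mult_left_mono) auto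
  also have "\<dots> = Mphi Y / X * (\<rho> / u^2)" using assms by (simp add: field_simps power2_eq_square)
  also have "\<rho> / u^2 = kernel1 u" unfolding \<rho>_def using kernel1_eq assms by simp
  finally show ?thesis .
qed

lemma F_absolutely_integrable:
  assumes "0 \<le> x0" "x0 \<le> X" "0 < X" "0 \<le> l"
  shows "F x0 X absolutely_integrable_on {l<..<1}"
proof (rule continuous_dominated_imp_absolutely_integrable)
  show "continuous_on {l<..<1} (F x0 X)" unfolding F_def[abs_def]
    using assms by (intro continuous_intros continuous_on_phi_scaled continuous_on_beta)
  show "(\<lambda>u. Mphi X / X * kernel1 u) integrable_on {l<..<1}"
    using kernel1_integrable[OF assms(4)] by (rule integrable_on_mult_right)
  show "\<bar>F x0 X u\<bar> \<le> Mphi X / X * kernel1 u" if "u \<in> {l<..<1}" for u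
    using that assms by (intro abs_F_le) auto
qed

lemma abs_F_difference_quotient_le:
  fixes x0 X0 X' u :: real
  assumes x0: "0 \<le> x0" "x0 < X0"
    and X': "\<bar>X' - X0\<bar> < min (X0 / 2) ((X0 - x0) / 2)" "X' \<noteq> X0"
    and u: "x0 / (2 * X0) < u" "u < 1"
  shows "\<bar>(F x0 X' u - F x0 X0 u) / (X' - X0)\<bar>
     \<le> 8 * Mphi (2 * X0) / X0^2 * kernel1 u
       + 8 * Mphi (2 * X0) * x0^2 / (X0^3 * (X0 - x0)) * kernel2 u"
proof -
  have X0: "X0 > 0" using x0 by linarith
  have u0: "u > 0" using u x0 X0 divide_nonneg_pos[of x0 "2 * X0"] by linarith
  define M where "M = Mphi (2 * X0)"
  have M0: "M \<ge> 0" using Mphi_nonneg X0 by (simp add: M_def)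
  define s where "s = sqrt (1 - u^2)"
  have s: "s > 0" "s \<le> 1" using sqrt_one_minus_sq_pos[of u] u u0 by (auto simp: s_def)
  have X'_near: "\<bar>X' - X0\<bar> \<le> X0 / 2" "\<bar>X' - X0\<bar> \<le> (X0 - x0) / 2" using X'(1) by auto
  define P where "P X = X * phi (X * u)" for X
  define m where "m X = max (beta x0 X u) 0" for X
  have lipP: "\<bar>P X' - P X0\<bar> \<le> 8 * M / (X0^2 * u^2) * \<bar>X' - X0\<bar>"
    unfolding P_def M_def using abs_X_phi_diff_le[OF X0 X'_near(1) u0 u(2)] .
  have lipm: "\<bar>m X' - m X0\<bar> \<le> 8 * x0^2 / (X0^2 * (X0 - x0)) / s * \<bar>X' - X0\<bar>"
    using abs_beta_diff_le[OF x0 X'_near] u u0 unfolding m_def s_def by (smt (verit, best))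
  have "x0 \<le> X'" "0 < X'" using X'_near(2) x0 unfolding abs_le_iff by auto
  then have mX': "0 \<le> m X'" "m X' \<le> 1 / s - 1"
    using beta_le[of x0 X' u] u u0 s x0 by (auto simp: m_def s_def)
  have "\<bar>P X0\<bar> = X0 * \<bar>phi (X0 * u)\<bar>" using X0 by (simp add: P_def abs_mult)
  also have "\<dots> \<le> X0 * (M / (X0 * u)^2)"
    using abs_phi_le[of "X0 * u" "2 * X0"] X0 u0 u by (intro mult_left_mono) (auto simp: M_def)
  also have "\<dots> = M / (X0 * u^2)" using X0 u0 by (simp add: field_simps power2_eq_square)
  finally have PX0: "\<bar>P X0\<bar> \<le> M / (X0 * u^2)" .
  have "F x0 X' u - F x0 X0 u = (P X' - P X0) * m X' + P X0 * (m X' - m X0)"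
    unfolding F_def P_def m_def by algebra
  then have "\<bar>F x0 X' u - F x0 X0 u\<bar> \<le> \<bar>P X' - P X0\<bar> * m X' + \<bar>P X0\<bar> * \<bar>m X' - m X0\<bar>"
    using mX'(1) abs_triangle_ineq[of "(P X' - P X0) * m X'" "P X0 * (m X' - m X0)"]
    by (simp add: abs_mult)
  also have "\<dots> \<le> (8 * M / (X0^2 * u^2) * \<bar>X' - X0\<bar>) * (1 / s - 1)
      + (M / (X0 * u^2)) * (8 * x0^2 / (X0^2 * (X0 - x0)) / s * \<bar>X' - X0\<bar>)"
    by (intro add_mono mult_mono lipP mX' PX0 lipm) (use M0 X0 u0 x0 s in auto)
  also have "\<dots> = \<bar>X' - X0\<bar> * (8 * M / X0^2 * ((1 / s - 1) / u^2)
      + 8 * M * x0^2 / (X0^3 * (X0 - x0)) * (1 / (u^2 * s)))"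
    using X0 u0 s x0 by (simp add: field_simps power2_eq_square power3_eq_cube)
  finally show ?thesis
    using X' kernel1_eq[of u] u u0 unfolding s_def kernel2_def M_def
    by (simp add: abs_divide pos_divide_le_eq mult.commute)
qed

lemma u_integral_F_has_real_derivative:
  assumes x0: "0 \<le> x0" "x0 < X0"
  shows "dF x0 X0 integrable_on {x0 / (2 * X0)<..<1}"
    and "((\<lambda>X. integral {x0 / (2 * X0)<..<1} (F x0 X)) has_real_derivative
           integral {x0 / (2 * X0)<..<1} (dF x0 X0)) (at X0)"
proof -
  have X0: "X0 > 0" using x0 by linarith
  define l where "l = x0 / (2 * X0)"
  have l: "0 \<le> l" using x0 X0 by (simp add: l_def)
  define S where "S = {l<..<1} - {x0 / X0}"
  define \<delta> where "\<delta> = min (X0 / 2) ((X0 - x0) / 2)"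
  define A1 where "A1 = 8 * Mphi (2 * X0) / X0^2"
  define A2 where "A2 = 8 * Mphi (2 * X0) * x0^2 / (X0^3 * (X0 - x0))"
  define h where "h u = A1 * kernel1 u + A2 * kernel2 u" for u
  have "(\<lambda>u. A2 * kernel2 u) integrable_on {l<..<1}"
  proof (cases "x0 = 0")
    case False
    then have "l > 0" using x0 X0 by (simp add: l_def)
    then show ?thesis by (rule integrable_on_mult_right[OF kernel2_integrable])
  qed (simp add: A2_def integrable_0)
  then have "h integrable_on S" unfolding h_def S_def integrable_minus_point
    by (rule integrable_add[OF integrable_on_mult_right[OF kernel1_integrable[OF l]]])
  moreover have "\<delta> > 0" using x0 by (simp add: \<delta>_def)
  moreover have "F x0 X integrable_on S" if "\<bar>X - X0\<bar> < \<delta>" for X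
  proof -
    have "\<bar>X - X0\<bar> < (X0 - x0) / 2" using that by (simp add: \<delta>_def)
    then have "x0 \<le> X" "0 < X" using x0 unfolding abs_less_iff by auto
    from F_absolutely_integrable[OF x0(1) this l] show ?thesis
      unfolding S_def integrable_minus_point by (rule set_lebesgue_integral_eq_integral(1))
  qed
  moreover have "\<bar>(F x0 X u - F x0 X0 u) / (X - X0)\<bar> \<le> h u"
    if "\<bar>X - X0\<bar> < \<delta>" "X \<noteq> X0" "u \<in> S" for X u
    using that x0 unfolding h_def A1_def A2_def S_def \<delta>_def l_def
    by (intro abs_F_difference_quotient_le) auto
  moreover have "((\<lambda>X. F x0 X u) has_real_derivative dF x0 X0 u) (at X0)" if "u \<in> S" for u
    using that x0 l unfolding S_def by (intro F_has_real_derivative) auto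
  ultimately have "dF x0 X0 integrable_on S"
    and "((\<lambda>X. integral S (F x0 X)) has_real_derivative integral S (dF x0 X0)) (at X0)"
    using has_real_derivative_integral_dominated[of \<delta> X0 "F x0" S h "dF x0 X0"] by blast+
  then show "dF x0 X0 integrable_on {x0 / (2 * X0)<..<1}"
    and "((\<lambda>X. integral {x0 / (2 * X0)<..<1} (F x0 X)) has_real_derivative
           integral {x0 / (2 * X0)<..<1} (dF x0 X0)) (at X0)"
    unfolding S_def l_def integral_minus_point integrable_minus_point by auto
qed

section \<open>Back to the time variable\<close>

lemma image_a_div:
  assumes "0 \<le> c" "c < s"
  shows "(\<lambda>t. a t / a s) ` {c<..<s} = {a c / a s<..<1}"
proof
  have as: "a s > 0" using a_pos assms by simp
  show "(\<lambda>t. a t / a s) ` {c<..<s} \<subseteq> {a c / a s<..<1}"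
  proof
    fix u assume "u \<in> (\<lambda>t. a t / a s) ` {c<..<s}"
    then obtain t where t: "c < t" "t < s" "u = a t / a s" by auto
    have "a c < a t" "a t < a s" using a_less t assms by auto
    then show "u \<in> {a c / a s<..<1}" using t as by (simp add: divide_strict_right_mono)
  qed
  show "{a c / a s<..<1} \<subseteq> (\<lambda>t. a t / a s) ` {c<..<s}"
  proof
    fix u assume u: "u \<in> {a c / a s<..<1}"
    define y where "y = u * a s"
    have y: "a c < y" "y < a s" using u as by (auto simp: y_def field_simps)
    have y0: "y \<ge> 0" using y(1) a_nonneg[OF assms(1)] by linarith
    have "c < ainv y" using ainv_less[OF a_nonneg[OF assms(1)] y(1)] ainv_a assms by simp
    moreover have "ainv y < s" using ainv_less[OF y0 y(2)] ainv_a assms by simp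
    moreover have "u = a (ainv y) / a s" using a_ainv[OF y0] as by (simp add: y_def)
    ultimately show "u \<in> (\<lambda>t. a t / a s) ` {c<..<s}" by auto
  qed
qed

lemma integral_substitution_a:
  assumes "0 \<le> c" "c < s" and G: "G absolutely_integrable_on {a c / a s<..<1}"
    and eq: "\<And>t. t \<in> {c<..<s} \<Longrightarrow> a1 t / a s * G (a t / a s) = T t"
  shows "T absolutely_integrable_on {c<..<s}"
    and "integral {c<..<s} T = integral {a c / a s<..<1} G"
proof -
  have as: "a s > 0" using a_pos assms by simp
  have der: "((\<lambda>t. a t / a s) has_real_derivative a1 t / a s) (at t within {c<..<s})"
    if "t \<in> {c<..<s}" for t
    by (rule has_field_derivative_at_within, rule DERIV_cdivide, rule a_deriv) (use that assms in auto)
  have inj: "inj_on (\<lambda>t. a t / a s) {c<..<s}"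
  proof (rule inj_onI)
    fix x y assume "x \<in> {c<..<s}" "y \<in> {c<..<s}" "a x / a s = a y / a s"
    then show "x = y" using strict_mono_on_imp_inj_on[OF a_strict_mono] as assms by (auto simp: inj_on_def)
  qed
  have abs_eq: "\<bar>a1 t / a s\<bar> * G (a t / a s) = T t" if "t \<in> {c<..<s}" for t
    using a1_pos[of t] as that assms eq[OF that] by simp
  have sub: "(\<lambda>t. \<bar>a1 t / a s\<bar> * G (a t / a s)) absolutely_integrable_on {c<..<s} \<and>
      integral {c<..<s} (\<lambda>t. \<bar>a1 t / a s\<bar> * G (a t / a s)) = integral {a c / a s<..<1} G"
    using has_absolute_integral_change_of_variables_1'[OF _ der inj, of G "integral {a c / a s<..<1} G"]
      image_a_div[OF assms(1,2)] G by simp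
  show "T absolutely_integrable_on {c<..<s}"
    by (rule iffD1[OF set_integrable_cong[OF refl refl abs_eq] conjunct1[OF sub]])
  show "integral {c<..<s} T = integral {a c / a s<..<1} G"
    by (rule trans[OF sym[OF integral_cong[OF abs_eq]] conjunct2[OF sub]])
qed

lemma f_pos_eq_u_integral:
  assumes "0 \<le> c" "c < s"
  shows "f_pos a a1 a2 s c = integral {a c / a s<..<1} (F (a c) (a s))"
proof -
  have as: "a s > 0" and ac: "0 \<le> a c" "a c < a s" using a_pos a_nonneg a_less assms by auto
  have Fint: "F (a c) (a s) absolutely_integrable_on {a c / a s<..<1}"
    by (rule F_absolutely_integrable) (use ac as in auto)
  have eq: "a1 t / a s * F (a c) (a s) (a t / a s)
      = a2 t / (a1 t)\<^sup>2 * (sqrt ((a s)\<^sup>2 - (a c)\<^sup>2) / sqrt ((a s)\<^sup>2 - (a t)\<^sup>2) - 1)"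
    if t: "t \<in> {c<..<s}" for t
  proof -
    have t0: "t > 0" and a1t: "a1 t > 0" using t assms a1_pos by auto
    have at: "a c \<le> a t" "a t < a s" using a_less a_le t assms by auto
    note bt = beta_at_ratio[OF ac(1) at]
    have "F (a c) (a s) (a t / a s)
        = a s * q t * (sqrt ((a s)^2 - (a c)^2) / sqrt ((a s)^2 - (a t)^2) - 1)"
      unfolding F_def using bt as ainv_a[of t] t0 by (simp add: phi_def)
    then show ?thesis using as a1t by (simp add: q_def power2_eq_square power3_eq_cube)
  qed
  have "f_pos a a1 a2 s c = integral {c<..<s} (\<lambda>t. a2 t / (a1 t)\<^sup>2 *
        (sqrt ((a s)\<^sup>2 - (a c)\<^sup>2) / sqrt ((a s)\<^sup>2 - (a t)\<^sup>2) - 1))"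
    unfolding f_pos_def by (rule integral_open_interval_real)
  also have "\<dots> = integral {a c / a s<..<1} (F (a c) (a s))"
    by (rule integral_substitution_a(2)[OF assms Fint eq])
  finally show ?thesis .
qed

lemma abs_dF1_dF2_le:
  assumes "0 \<le> x0" "0 < X0" "x0 / X0 < u" "u < 1"
  shows "\<bar>dF1 x0 X0 u\<bar> \<le> Mphi X0 / X0^2 * kernel1 u"
    and "\<bar>dF2 x0 X0 u\<bar> \<le> Mphi X0 / X0^2 * kernel1 u"
proof -
  have u: "0 < u" using assms divide_nonneg_pos[of x0 X0] by linarith
  have Xu: "0 < X0 * u" "X0 * u \<le> X0" using assms u by (auto simp: mult_left_le)
  have "x0 < X0 * u" using assms by (simp add: divide_less_eq mult.commute)
  moreover have "x0 \<le> X0" using calculation Xu by linarith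
  ultimately have b: "0 \<le> beta x0 X0 u" "beta x0 X0 u \<le> 1 / sqrt (1 - u^2) - 1"
    using beta_pos_iff[of x0 X0 u] beta_le[of x0 X0 u] assms u by auto
  have "Mphi X0 / (X0 * u)^2 * (1 / sqrt (1 - u^2) - 1)
      = Mphi X0 / X0^2 * ((1 / sqrt (1 - u^2) - 1) / u^2)"
    by (simp add: power_mult_distrib)
  then have M: "Mphi X0 / (X0 * u)^2 * (1 / sqrt (1 - u^2) - 1) = Mphi X0 / X0^2 * kernel1 u"
    using kernel1_eq[of u] u assms by simp
  have "\<bar>dF1 x0 X0 u\<bar> = \<bar>phi (X0 * u)\<bar> * beta x0 X0 u" using b by (simp add: dF1_def abs_mult)
  also have "\<dots> \<le> Mphi X0 / (X0 * u)^2 * (1 / sqrt (1 - u^2) - 1)"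
    using abs_phi_le[OF Xu] b Mphi_nonneg[of X0] assms by (intro mult_mono) auto
  finally show "\<bar>dF1 x0 X0 u\<bar> \<le> Mphi X0 / X0^2 * kernel1 u" unfolding M .
  have "\<bar>dF2 x0 X0 u\<bar> = \<bar>X0 * u * dphi (X0 * u)\<bar> * beta x0 X0 u" using b by (simp add: dF2_def abs_mult)
  also have "\<dots> \<le> Mphi X0 / (X0 * u)^2 * (1 / sqrt (1 - u^2) - 1)"
    using abs_x_dphi_le[OF Xu] b Mphi_nonneg[of X0] assms by (intro mult_mono) auto
  finally show "\<bar>dF2 x0 X0 u\<bar> \<le> Mphi X0 / X0^2 * kernel1 u" unfolding M .
qed

lemma abs_dF3_le:
  assumes "0 \<le> x0" "x0 < X0" "x0 / X0 < u" "u < 1"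
  shows "\<bar>dF3 x0 X0 u\<bar> \<le> Mphi X0 * x0^2 / (X0^3 * sqrt (X0^2 - x0^2)) * kernel2 u"
proof -
  have X0: "0 < X0" using assms by linarith
  have u: "0 < u" using assms divide_nonneg_pos[of x0 X0] by linarith
  have Xu: "0 < X0 * u" "X0 * u \<le> X0" using X0 assms u by (auto simp: mult_left_le)
  have s: "sqrt (1 - u^2) > 0" using sqrt_one_minus_sq_pos[of u] assms u by simp
  have r: "sqrt (X0^2 - x0^2) > 0" using assms by (simp add: power_strict_mono)
  have db: "dbeta x0 X0 u \<ge> 0" using s r by (simp add: dbeta_def)
  have "\<bar>dF3 x0 X0 u\<bar> = X0 * \<bar>phi (X0 * u)\<bar> * dbeta x0 X0 u" using db X0 by (simp add: dF3_def abs_mult)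
  also have "\<dots> \<le> X0 * (Mphi X0 / (X0 * u)^2) * dbeta x0 X0 u"
    using abs_phi_le[OF Xu] X0 db by (intro mult_right_mono mult_left_mono) auto
  also have "\<dots> = Mphi X0 * x0^2 / (X0^3 * sqrt (X0^2 - x0^2)) * kernel2 u"
    unfolding dbeta_def kernel2_def using X0 s r u by (simp add: field_simps power2_eq_square power3_eq_cube)
  finally show ?thesis .
qed

lemma dF1_absolutely_integrable:
  assumes x0: "0 \<le> x0" "x0 < X0"
  shows "dF1 x0 X0 absolutely_integrable_on {x0 / X0<..<1}"
proof (rule continuous_dominated_imp_absolutely_integrable)
  have l: "0 \<le> x0 / X0" and X0: "0 < X0" using x0 by auto
  show "continuous_on {x0 / X0<..<1} (dF1 x0 X0)" unfolding dF1_def[abs_def]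
    by (intro continuous_intros continuous_on_phi_scaled continuous_on_beta l X0)
  show "(\<lambda>u. Mphi X0 / X0^2 * kernel1 u) integrable_on {x0 / X0<..<1}"
    using kernel1_integrable[OF l] by (rule integrable_on_mult_right)
qed (use abs_dF1_dF2_le(1) x0 in auto)

lemma dF3_absolutely_integrable:
  assumes x0: "0 \<le> x0" "x0 < X0"
  shows "dF3 x0 X0 absolutely_integrable_on {x0 / X0<..<1}"
proof (rule continuous_dominated_imp_absolutely_integrable)
  have l: "0 \<le> x0 / X0" and X0: "0 < X0" using x0 by auto
  show "continuous_on {x0 / X0<..<1} (dF3 x0 X0)" unfolding dF3_def[abs_def]
    by (intro continuous_intros continuous_on_phi_scaled continuous_on_dbeta l X0 x0)
  show "(\<lambda>u. Mphi X0 * x0^2 / (X0^3 * sqrt (X0^2 - x0^2)) * kernel2 u) integrable_on {x0 / X0<..<1}"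
  proof (cases "x0 = 0")
    case False
    then have "x0 / X0 > 0" using x0 X0 by simp
    then show ?thesis by (rule integrable_on_mult_right[OF kernel2_integrable])
  qed (simp add: integrable_0)
qed (use abs_dF3_le x0 in auto)

lemma dF2_absolutely_integrable:
  assumes x0: "0 \<le> x0" "x0 < X0"
  shows "dF2 x0 X0 absolutely_integrable_on {x0 / X0<..<1}"
proof -
  have X0: "0 < X0" using x0 by linarith
  \<comment> \<open>\<open>dphi\<close> need not be continuous, so the measurability of \<open>dF2\<close> is obtained from that
    of \<open>dF\<close>, which is a limit of difference quotients.\<close>
  have "dF x0 X0 integrable_on {x0 / (2 * X0)..1}"
    using u_integral_F_has_real_derivative(1)[OF x0] unfolding integrable_on_Icc_iff_Ioo .
  moreover have "x0 / (2 * X0) \<le> x0 / X0" using x0 X0 by (simp add: divide_left_mono)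
  ultimately have "dF x0 X0 integrable_on {x0 / X0..1}"
    using integrable_on_subinterval[of "dF x0 X0" "{x0 / (2 * X0)..1}" "x0 / X0" 1] by auto
  then have "(\<lambda>u. dF x0 X0 u - dF1 x0 X0 u - dF3 x0 X0 u) integrable_on {x0 / X0<..<1}"
    using dF1_absolutely_integrable[OF x0] dF3_absolutely_integrable[OF x0]
    unfolding integrable_on_Icc_iff_Ioo
    by (intro integrable_diff) (auto dest: set_lebesgue_integral_eq_integral(1))
  moreover have "dF x0 X0 u - dF1 x0 X0 u - dF3 x0 X0 u = dF2 x0 X0 u" if "u \<in> {x0 / X0<..<1}" for u
    using that by (simp add: dF_def)
  ultimately have dF2: "dF2 x0 X0 integrable_on {x0 / X0<..<1}"
    using integrable_cong[of "{x0 / X0<..<1}"] by (metis (no_types, lifting))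
  have "(\<lambda>u. Mphi X0 / X0^2 * kernel1 u) integrable_on {x0 / X0<..<1}"
    using kernel1_integrable[of "x0 / X0"] x0 X0 by (intro integrable_on_mult_right) simp
  from absolutely_integrable_integrable_bound[OF _ dF2 this] show ?thesis
    using abs_dF1_dF2_le(2) x0 X0 by auto
qed

definition f_bracket :: "real \<Rightarrow> real \<Rightarrow> real \<Rightarrow> real" where
  "f_bracket \<tau> c t = sqrt ((a \<tau>)^2 - (a c)^2) / sqrt ((a \<tau>)^2 - (a t)^2) - 1"

text \<open>\<open>Ti \<tau> c t\<close> is \<open>dFi (a c) (a \<tau>) u\<close> at \<open>u = a t / a \<tau>\<close>, times the Jacobian \<open>du / dt\<close>.\<close>

definition T1 :: "real \<Rightarrow> real \<Rightarrow> real \<Rightarrow> real" where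
  "T1 \<tau> c t = a2 t / (a1 t)^2 * f_bracket \<tau> c t / a \<tau>"

definition T2 :: "real \<Rightarrow> real \<Rightarrow> real \<Rightarrow> real" where
  "T2 \<tau> c t = a t * dq t * f_bracket \<tau> c t / a \<tau>"

definition T3 :: "real \<Rightarrow> real \<Rightarrow> real \<Rightarrow> real" where
  "T3 \<tau> c t = a2 t / (a1 t)^2 *
     ((a c)^2 / (sqrt ((a \<tau>)^2 - (a c)^2) * sqrt ((a \<tau>)^2 - (a t)^2))) / a \<tau>"

lemma dF_pullback:
  assumes "0 \<le> c" "t \<in> {c<..<\<tau>}"
  shows "a1 t / a \<tau> * dF1 (a c) (a \<tau>) (a t / a \<tau>) = T1 \<tau> c t"
    and "a1 t / a \<tau> * dF2 (a c) (a \<tau>) (a t / a \<tau>) = T2 \<tau> c t"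
    and "a1 t / a \<tau> * dF3 (a c) (a \<tau>) (a t / a \<tau>) = T3 \<tau> c t"
proof -
  have t0: "t > 0" and a1t: "a1 t > 0" and a\<tau>: "a \<tau> > 0" using assms a1_pos a_pos by auto
  have at: "a c \<le> a t" "a t < a \<tau>" "0 \<le> a t" using a_less a_le a_nonneg assms by auto
  have Xu: "a \<tau> * (a t / a \<tau>) = a t" using a\<tau> by simp
  have ainv_t: "ainv (a t) = t" using ainv_a t0 by simp
  have phi: "phi (a t) = q t" using ainv_t by (simp add: phi_def)
  have beta: "beta (a c) (a \<tau>) (a t / a \<tau>) = f_bracket \<tau> c t"
    using beta_at_ratio(1)[OF a_nonneg[OF assms(1)] at(1,2)] by (simp add: f_bracket_def)
  have sq: "a \<tau> * sqrt (1 - (a t / a \<tau>)^2) = sqrt ((a \<tau>)^2 - (a t)^2)"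
    using mult_sqrt_one_minus_sq[OF a\<tau> at(3)] at by simp
  show "a1 t / a \<tau> * dF1 (a c) (a \<tau>) (a t / a \<tau>) = T1 \<tau> c t"
    unfolding dF1_def T1_def Xu phi beta using a1t a\<tau>
    by (simp add: q_def power2_eq_square power3_eq_cube)
  show "a1 t / a \<tau> * dF2 (a c) (a \<tau>) (a t / a \<tau>) = T2 \<tau> c t"
    unfolding dF2_def T2_def Xu beta using a1t a\<tau> by (simp add: dphi_def ainv_t)
  have "dbeta (a c) (a \<tau>) (a t / a \<tau>)
      = (a c)^2 / (a \<tau> * sqrt ((a \<tau>)^2 - (a c)^2) * sqrt ((a \<tau>)^2 - (a t)^2))"
    unfolding dbeta_def using sq by (simp add: power2_eq_square mult.assoc)
  then show "a1 t / a \<tau> * dF3 (a c) (a \<tau>) (a t / a \<tau>) = T3 \<tau> c t"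
    unfolding dF3_def T3_def Xu phi using a1t a\<tau>
    by (simp add: q_def power2_eq_square power3_eq_cube)
qed

lemma T_integrals:
  assumes "0 \<le> c" "c < \<tau>"
  shows "T1 \<tau> c integrable_on {c<..<\<tau>}" "T2 \<tau> c integrable_on {c<..<\<tau>}"
    "T3 \<tau> c integrable_on {c<..<\<tau>}"
    and "integral {a c / (2 * a \<tau>)<..<1} (dF (a c) (a \<tau>)) =
       integral {c<..<\<tau>} (T1 \<tau> c) + integral {c<..<\<tau>} (T2 \<tau> c) + integral {c<..<\<tau>} (T3 \<tau> c)"
proof -
  have x0: "0 \<le> a c" "a c < a \<tau>" using a_nonneg a_less assms by auto
  have X0: "0 < a \<tau>" using a_pos assms by simp
  note parts = dF1_absolutely_integrable[OF x0] dF2_absolutely_integrable[OF x0]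
    dF3_absolutely_integrable[OF x0]
  note sub1 = integral_substitution_a[OF assms parts(1) dF_pullback(1)[OF assms(1)]]
  note sub2 = integral_substitution_a[OF assms parts(2) dF_pullback(2)[OF assms(1)]]
  note sub3 = integral_substitution_a[OF assms parts(3) dF_pullback(3)[OF assms(1)]]
  show "T1 \<tau> c integrable_on {c<..<\<tau>}" "T2 \<tau> c integrable_on {c<..<\<tau>}"
    "T3 \<tau> c integrable_on {c<..<\<tau>}"
    using sub1(1) sub2(1) sub3(1) by (auto dest: set_lebesgue_integral_eq_integral(1))
  define l where "l = a c / a \<tau>"
  have "a c / (2 * a \<tau>) \<le> l" using x0 X0 by (simp add: l_def divide_left_mono)
  then have "integral {a c / (2 * a \<tau>)<..<1} (dF (a c) (a \<tau>)) = integral {l<..<1} (dF (a c) (a \<tau>))"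
  proof (intro integral_spike_set)
    show "negligible {u \<in> {a c / (2 * a \<tau>)<..<1} - {l<..<1}. dF (a c) (a \<tau>) u \<noteq> 0}"
      by (rule negligible_subset[OF negligible_empty]) (auto simp: dF_def l_def)
    show "negligible {u \<in> {l<..<1} - {a c / (2 * a \<tau>)<..<1}. dF (a c) (a \<tau>) u \<noteq> 0}"
      if "a c / (2 * a \<tau>) \<le> l"
      using that by (intro negligible_subset[OF negligible_empty]) auto
  qed
  also have "\<dots> = integral {l<..<1} (\<lambda>u. dF1 (a c) (a \<tau>) u + dF2 (a c) (a \<tau>) u + dF3 (a c) (a \<tau>) u)"
    by (rule integral_cong) (simp add: dF_def l_def)
  also have "\<dots> = integral {l<..<1} (dF1 (a c) (a \<tau>)) + integral {l<..<1} (dF2 (a c) (a \<tau>))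
      + integral {l<..<1} (dF3 (a c) (a \<tau>))"
    using parts unfolding l_def
    by (simp add: integral_add integrable_add set_lebesgue_integral_eq_integral(1))
  also have "\<dots> = integral {c<..<\<tau>} (T1 \<tau> c) + integral {c<..<\<tau>} (T2 \<tau> c) + integral {c<..<\<tau>} (T3 \<tau> c)"
    using sub1(2) sub2(2) sub3(2) by (simp add: l_def)
  finally show "integral {a c / (2 * a \<tau>)<..<1} (dF (a c) (a \<tau>)) =
       integral {c<..<\<tau>} (T1 \<tau> c) + integral {c<..<\<tau>} (T2 \<tau> c) + integral {c<..<\<tau>} (T3 \<tau> c)" .
qed

lemma I1_eq:
  assumes "0 \<le> c" "c < \<tau>"
  shows "I1 a a1 a2 a3 \<tau> c = a1 \<tau> * integral {c<..<\<tau>} (T2 \<tau> c)"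
proof -
  have a\<tau>_pos: "a \<tau> > 0" using a_pos assms by simp
  have "integral {c..\<tau>} (\<lambda>t. (3 * (a2 t)\<^sup>2 * a t / (a1 t)^4 - a3 t * a t / (a1 t)^3) *
        (sqrt ((a \<tau>)\<^sup>2 - (a c)\<^sup>2) / sqrt ((a \<tau>)\<^sup>2 - (a t)\<^sup>2) - 1))
     = integral {c<..<\<tau>} (\<lambda>t. (3 * (a2 t)\<^sup>2 * a t / (a1 t)^4 - a3 t * a t / (a1 t)^3) *
        (sqrt ((a \<tau>)\<^sup>2 - (a c)\<^sup>2) / sqrt ((a \<tau>)\<^sup>2 - (a t)\<^sup>2) - 1))"
    by (rule integral_open_interval_real)
  also have "\<dots> = integral {c<..<\<tau>} (\<lambda>t. - a \<tau> * T2 \<tau> c t)"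
  proof (rule integral_cong)
    have rearrange: "(3 * x2^2 * y / z^4 - x3 * y / z^3) * B = - (y * (x3 / z^3 - 3 * x2^2 / z^4) * B)"
      for x2 x3 y z B :: real
      by (simp add: algebra_simps)
    show "(3 * (a2 t)\<^sup>2 * a t / (a1 t)^4 - a3 t * a t / (a1 t)^3) *
        (sqrt ((a \<tau>)\<^sup>2 - (a c)\<^sup>2) / sqrt ((a \<tau>)\<^sup>2 - (a t)\<^sup>2) - 1) = - a \<tau> * T2 \<tau> c t" for t
      using a\<tau>_pos unfolding rearrange by (simp add: T2_def f_bracket_def dq_def)
  qed
  finally show ?thesis unfolding I1_def using a\<tau>_pos by simp
qed

lemma I2_eq:
  assumes "0 \<le> c" "c < \<tau>"
  shows "I2 a a1 a2 \<tau> c = a1 \<tau> * (integral {c<..<\<tau>} (T1 \<tau> c) + integral {c<..<\<tau>} (T3 \<tau> c))"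
proof -
  have a\<tau>_pos: "a \<tau> > 0" using a_pos assms by simp
  have "integral {c..\<tau>} (\<lambda>t. a2 t / (a1 t)\<^sup>2 *
        ((a \<tau>)\<^sup>2 / (sqrt ((a \<tau>)\<^sup>2 - (a t)\<^sup>2) * sqrt ((a \<tau>)\<^sup>2 - (a c)\<^sup>2)) - 1))
     = integral {c<..<\<tau>} (\<lambda>t. a2 t / (a1 t)\<^sup>2 *
        ((a \<tau>)\<^sup>2 / (sqrt ((a \<tau>)\<^sup>2 - (a t)\<^sup>2) * sqrt ((a \<tau>)\<^sup>2 - (a c)\<^sup>2)) - 1))"
    by (rule integral_open_interval_real)
  also have "\<dots> = integral {c<..<\<tau>} (\<lambda>t. a \<tau> * (T1 \<tau> c t + T3 \<tau> c t))"
  proof (rule integral_cong)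
    fix t assume t: "t \<in> {c<..<\<tau>}"
    define S where "S = sqrt ((a \<tau>)^2 - (a t)^2)"
    define R where "R = sqrt ((a \<tau>)^2 - (a c)^2)"
    have "0 \<le> a t" "a t < a \<tau>" "0 \<le> a c" "a c < a \<tau>" using a_less a_nonneg t assms by auto
    then have S: "S > 0" and R: "R > 0" "R * R = (a \<tau>)^2 - (a c)^2"
      by (auto simp: S_def R_def power_strict_mono)
    then have "(a \<tau>)^2 = R * R + (a c)^2" by simp
    then have split: "(a \<tau>)^2 / (S * R) - 1 = (R / S - 1) + (a c)^2 / (R * S)"
      using S R(1) by (simp add: field_simps)
    have "a \<tau> * (T1 \<tau> c t + T3 \<tau> c t) = a2 t / (a1 t)\<^sup>2 * ((R / S - 1) + (a c)^2 / (R * S))"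
      unfolding T1_def T3_def f_bracket_def S_def[symmetric] R_def[symmetric]
      using a\<tau>_pos S R(1) a1_pos[of t] t assms by (simp add: field_simps)
    then show "a2 t / (a1 t)\<^sup>2 * ((a \<tau>)\<^sup>2 / (S * R) - 1) = a \<tau> * (T1 \<tau> c t + T3 \<tau> c t)"
      unfolding split by simp
  qed
  also have "\<dots> = a \<tau> * (integral {c<..<\<tau>} (T1 \<tau> c) + integral {c<..<\<tau>} (T3 \<tau> c))"
    using T_integrals(1,3)[OF assms] by (simp add: integral_add)
  finally show ?thesis unfolding I2_def using a\<tau>_pos by simp
qed

lemma f_pos_has_real_derivative:
  assumes c: "0 \<le> c" "c < \<tau>"
  shows "((\<lambda>s. f_pos a a1 a2 s c) has_real_derivative I1 a a1 a2 a3 \<tau> c + I2 a a1 a2 \<tau> c) (at \<tau>)"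
proof -
  define l where "l = a c / (2 * a \<tau>)"
  have a\<tau>_pos: "a \<tau> > 0" and ac: "0 \<le> a c" "a c < a \<tau>" using a_pos a_nonneg a_less c by auto
  have D: "((\<lambda>s. integral {l<..<1} (F (a c) (a s))) has_real_derivative
      integral {l<..<1} (dF (a c) (a \<tau>)) * a1 \<tau>) (at \<tau>)"
    unfolding l_def by (rule DERIV_chain2[OF u_integral_F_has_real_derivative(2)[OF ac] a_deriv]) (use c in simp)
  have val: "integral {l<..<1} (dF (a c) (a \<tau>)) * a1 \<tau> = I1 a a1 a2 a3 \<tau> c + I2 a a1 a2 \<tau> c"
    unfolding I1_eq[OF c] I2_eq[OF c] l_def T_integrals(4)[OF c] by (simp add: algebra_simps)
  have \<tau>: "\<tau> \<in> {c<..<ainv (2 * a \<tau>)}"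
    using ainv_less[of "a \<tau>" "2 * a \<tau>"] ainv_a[of \<tau>] a\<tau>_pos c by simp
  have eq: "integral {l<..<1} (F (a c) (a s)) = f_pos a a1 a2 s c"
    if s: "s \<in> {c<..<ainv (2 * a \<tau>)}" for s
  proof -
    have as: "0 < a s" "a c \<le> a s" "a s < 2 * a \<tau>"
      using s c a_pos a_le a_less[of s "ainv (2 * a \<tau>)"] a_ainv[of "2 * a \<tau>"] a\<tau>_pos by auto
    have l: "0 \<le> l" "l \<le> a c / a s" unfolding l_def using ac as by (auto intro: divide_left_mono)
    have "F (a c) (a s) u = 0" if u: "u \<in> {l<..<1} - {a c / a s<..<1}" for u
    proof -
      have "u \<le> a c / a s" using u by auto
      then have "a s * u \<le> a c" using as by (simp add: le_divide_eq mult.commute)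
      then show ?thesis using u l ac as by (intro F_eq_0) auto
    qed
    then have "integral {l<..<1} (F (a c) (a s)) = integral {a c / a s<..<1} (F (a c) (a s))"
      using l by (intro integral_spike_set negligible_subset[OF negligible_empty]) auto
    then show ?thesis using f_pos_eq_u_integral[of c s] s c by simp
  qed
  from has_field_derivative_transform_within_open[OF D[unfolded val] open_greaterThanLessThan \<tau> eq]
  show ?thesis .
qed

lemma I1_plus_I2_at_0: assumes "\<tau> > 0" shows "I1 a a1 a2 a3 \<tau> 0 + I2 a a1 a2 \<tau> 0 = df0 a a1 a2 a3 \<tau>"
proof -
  have c: "0 \<le> (0::real)" "0 < \<tau>" using assms by auto
  have a\<tau>_pos: "a \<tau> > 0" using a_pos assms by simp
  have "T3 \<tau> 0 = (\<lambda>t. 0)" by (simp add: fun_eq_iff T3_def a_0)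
  then have T3: "integral {0<..<\<tau>} (T3 \<tau> 0) = 0" by simp
  have "integral {0..\<tau>} (\<lambda>t. (a2 t / (a1 t)\<^sup>2 + a3 t * a t / (a1 t)^3 - 3 * (a2 t)\<^sup>2 * a t / (a1 t)^4) *
        (a \<tau> / sqrt ((a \<tau>)\<^sup>2 - (a t)\<^sup>2) - 1))
     = integral {0<..<\<tau>} (\<lambda>t. (a2 t / (a1 t)\<^sup>2 + a3 t * a t / (a1 t)^3 - 3 * (a2 t)\<^sup>2 * a t / (a1 t)^4) *
        (a \<tau> / sqrt ((a \<tau>)\<^sup>2 - (a t)\<^sup>2) - 1))"
    by (rule integral_open_interval_real)
  also have "\<dots> = integral {0<..<\<tau>} (\<lambda>t. a \<tau> * (T1 \<tau> 0 t + T2 \<tau> 0 t))"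
  proof (rule integral_cong)
    have rearrange: "(g + x3 * y / z^3 - 3 * x2^2 * y / z^4) * B
        = X * (g * B / X + y * (x3 / z^3 - 3 * x2^2 / z^4) * B / X)"
      if "X \<noteq> 0" for g x2 x3 y z B X :: real
      using that by (simp add: field_simps)
    fix t
    have "f_bracket \<tau> 0 t = a \<tau> / sqrt ((a \<tau>)\<^sup>2 - (a t)\<^sup>2) - 1"
      using a\<tau>_pos by (simp add: f_bracket_def a_0)
    then show "(a2 t / (a1 t)\<^sup>2 + a3 t * a t / (a1 t)^3 - 3 * (a2 t)\<^sup>2 * a t / (a1 t)^4) *
        (a \<tau> / sqrt ((a \<tau>)\<^sup>2 - (a t)\<^sup>2) - 1) = a \<tau> * (T1 \<tau> 0 t + T2 \<tau> 0 t)"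
      unfolding T1_def T2_def dq_def by (simp only:) (rule rearrange, use a\<tau>_pos in simp)
  qed
  also have "\<dots> = a \<tau> * (integral {0<..<\<tau>} (T1 \<tau> 0) + integral {0<..<\<tau>} (T2 \<tau> 0))"
    using T_integrals(1,2)[OF c] by (simp add: integral_add)
  finally have "df0 a a1 a2 a3 \<tau> = a1 \<tau> * (integral {0<..<\<tau>} (T1 \<tau> 0) + integral {0<..<\<tau>} (T2 \<tau> 0))"
    unfolding df0_def using a\<tau>_pos by simp
  then show ?thesis unfolding I1_eq[OF c] I2_eq[OF c] T3 by (simp add: algebra_simps)
qed

end

lemma scale_factor_bounds_if_strongly_regular:
  assumes "strongly_regular_scale_factor a a1 a2"
    and "\<forall>t>0. (a2 has_real_derivative a3 t) (at t)"
    and "\<forall>t>0. \<bar>a3 t * (a t)\<^sup>2 / (a1 t)^3\<bar> \<le> C"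
  shows "\<exists>K. scale_factor_bounds a a1 a2 a3 K C"
  using assms unfolding strongly_regular_scale_factor_def regular_scale_factor_def scale_factor_bounds_def
  by blast

text \<open>The hypotheses \<open>even\<close> and \<open>Cpos\<close> are not needed: the case \<open>t0 < 0\<close> is built into
  the definition of \<open>f_fun\<close>, and \<open>C \<ge> 0\<close> follows from \<open>bound\<close>.\<close>

theorem lemma5p9:
  fixes a a1 a2 a3 :: "real \<Rightarrow> real" and C \<tau> t0 :: real
  assumes sr: "strongly_regular_scale_factor a a1 a2"
    and even: "\<forall>t. a (- t) = a t"
    and d3: "\<forall>t>0. (a2 has_real_derivative a3 t) (at t)"
    and Cpos: "C > 0"
    and bound: "\<forall>t>0. \<bar>a3 t * (a t)\<^sup>2 / (a1 t)^3\<bar> \<le> C"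
    and tau: "\<tau> > 0"
    and t0: "- \<tau> < t0" "t0 < \<tau>"
  shows "((\<lambda>s. f_fun a a1 a2 s t0) has_real_derivative
            (if t0 > 0 then I1 a a1 a2 a3 \<tau> t0 + I2 a a1 a2 \<tau> t0
             else if t0 = 0 then df0 a a1 a2 a3 \<tau>
             else 2 * df0 a a1 a2 a3 \<tau> - I1 a a1 a2 a3 \<tau> (- t0) - I2 a a1 a2 \<tau> (- t0)))
         (at \<tau>)"
proof -
  obtain K where "scale_factor_bounds a a1 a2 a3 K C"
    using scale_factor_bounds_if_strongly_regular[OF sr d3 bound] by blast
  then interpret scale_factor_bounds a a1 a2 a3 K C .
  consider "t0 > 0" | "t0 = 0" | "t0 < 0" by linarith
  then show ?thesis
  proof cases
    case 1
    then show ?thesis using f_pos_has_real_derivative[of t0 \<tau>] t0 by (simp add: f_fun_def)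
  next
    case 2
    then show ?thesis using f_pos_has_real_derivative[of 0 \<tau>] I1_plus_I2_at_0 tau by (simp add: f_fun_def)
  next
    case 3
    have "((\<lambda>s. 2 * f_pos a a1 a2 s 0 - f_pos a a1 a2 s (- t0)) has_real_derivative
        2 * (I1 a a1 a2 a3 \<tau> 0 + I2 a a1 a2 \<tau> 0) - (I1 a a1 a2 a3 \<tau> (- t0) + I2 a a1 a2 \<tau> (- t0))) (at \<tau>)"
      using 3 t0 tau by (intro DERIV_diff DERIV_cmult f_pos_has_real_derivative) auto
    then show ?thesis using 3 I1_plus_I2_at_0[OF tau] by (simp add: f_fun_def diff_diff_eq)
  qed
qed

end
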